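(* Let $\mathbf p$ be a Nash-routing of a sum-bucket game on a simple graph with $n\ge2$ nodes whose strategy paths are all simple, and let $\mathbf p^*$ be an optimal routing with $\overline C^*=\overline C(\mathbf p^* )$ and $\overline D^*=\overline D(\mathbf p^* )$. Then $\overline C(\mathbf p)\le18\,\overline C^*\,\overline D^*\lg^2 n$.
   Context: A routing game $(\mathbf N,G,\mathcal P)$: players $\{1,\dots,N\}$ ($N\ge1$), a simple graph $G$ with $n$ nodes, and for each player $i$ a nonempty finite set $\mathcal P_i$ of simple paths (each with at least one edge) from $u_i$ to $v_i$; $\mathcal P=\bigcup_i\mathcal P_i$, $L=\max_{p\in\mathcal P}|p|$ (number of edges). A routing is $\mathbf p=[p_1,\dots,p_N]$, $p_i\in\mathcal P_i$. Sum-bucket game: for $k=0,\dots,\lceil\lg L\rceil$ bucket $B_k$ = paths in $\mathcal P$ with length in $[2^k,2^{k+1})$, $B(q)$ = bucket index of $q$; normalized length $\overline D_q=2^{B(q)+1}-1$; $\overline C_{e,q}(\mathbf p)$ = number of players $j$ with $e\in p_j$ and $B(p_j)=B(q)$; $\overline C_q(\mathbf p)=\max_{e\in q}\overline C_{e,q}(\mathbf p)$; $\overline C_i=\overline C_{p_i}$, $\overline D_i=\overline D_{p_i}$; player cost $pc_i=\overline C_i+\overline D_i$; $\overline C(\mathbf p)=\max_i\overline C_i$, $\overline D(\mathbf p)=\max_i\overline D_i$; social cost $SC=\overline C+\overline D$. A Nash-routing: no player can strictly lower its cost by unilaterally changing its path within $\mathcal P_i$; an optimal routing minimizes $SC$.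 $\lg=\log_2$. *)

theory Defs
  imports Complex_Main
begin

definition simple_graph :: "'v set \<Rightarrow> 'v set set \<Rightarrow> bool" where
  "simple_graph V E \<longleftrightarrow> finite V \<and> (\<forall>e\<in>E. e \<subseteq> V \<and> card e = 2)"

definition path_edges :: "'v list \<Rightarrow> 'v set set" where
  "path_edges q = {{q ! k, q ! Suc k} | k. Suc k < length q}"

definition plen :: "'v list \<Rightarrow> nat" where
  "plen q = length q - 1"

definition simple_path :: "'v set \<Rightarrow> 'v set set \<Rightarrow> 'v \<Rightarrow> 'v \<Rightarrow> 'v list \<Rightarrow> bool" where
  "simple_path V E u v q \<longleftrightarrow> length q \<ge> 2 \<and> distinct q \<and> set q \<subseteq> V \<and>
     hd q = u \<and> last q = v \<and> path_edges q \<subseteq> E"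

definition routing_game :: "'v set \<Rightarrow> 'v set set \<Rightarrow> nat \<Rightarrow> (nat \<Rightarrow> 'v list set) \<Rightarrow> bool" where
  "routing_game V E N P \<longleftrightarrow> simple_graph V E \<and> N \<ge> 1 \<and>
     (\<forall>i<N. finite (P i) \<and> P i \<noteq> {} \<and>
        (\<exists>u v. \<forall>q\<in>P i. simple_path V E u v q))"

definition is_routing :: "nat \<Rightarrow> (nat \<Rightarrow> 'v list set) \<Rightarrow> (nat \<Rightarrow> 'v list) \<Rightarrow> bool" where
  "is_routing N P p \<longleftrightarrow> (\<forall>i<N. p i \<in> P i)"

(* bucket index: the k with 2^k \<le> |q| < 2^(k+1) *)
definition bucket :: "'v list \<Rightarrow> nat" where
  "bucket q = (GREATEST k. 2 ^ k \<le> plen q)"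

definition Dbar_path :: "'v list \<Rightarrow> nat" where
  "Dbar_path q = 2 ^ (bucket q + 1) - 1"

definition Cbar_edge :: "nat \<Rightarrow> (nat \<Rightarrow> 'v list) \<Rightarrow> 'v set \<Rightarrow> 'v list \<Rightarrow> nat" where
  "Cbar_edge N p e q = card {j. j < N \<and> e \<in> path_edges (p j) \<and> bucket (p j) = bucket q}"

definition Cbar_path :: "nat \<Rightarrow> (nat \<Rightarrow> 'v list) \<Rightarrow> 'v list \<Rightarrow> nat" where
  "Cbar_path N p q = Max ((\<lambda>e. Cbar_edge N p e q) ` path_edges q)"

definition player_cost :: "nat \<Rightarrow> (nat \<Rightarrow> 'v list) \<Rightarrow> nat \<Rightarrow> nat" where
  "player_cost N p i = Cbar_path N p (p i) + Dbar_path (p i)"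

definition Cbar :: "nat \<Rightarrow> (nat \<Rightarrow> 'v list) \<Rightarrow> nat" where
  "Cbar N p = Max ((\<lambda>i. Cbar_path N p (p i)) ` {..<N})"

definition Dbar :: "nat \<Rightarrow> (nat \<Rightarrow> 'v list) \<Rightarrow> nat" where
  "Dbar N p = Max ((\<lambda>i. Dbar_path (p i)) ` {..<N})"

definition social_cost :: "nat \<Rightarrow> (nat \<Rightarrow> 'v list) \<Rightarrow> nat" where
  "social_cost N p = Cbar N p + Dbar N p"

definition nash_routing :: "nat \<Rightarrow> (nat \<Rightarrow> 'v list set) \<Rightarrow> (nat \<Rightarrow> 'v list) \<Rightarrow> bool" where
  "nash_routing N P p \<longleftrightarrow> is_routing N P p \<and>
     (\<forall>i<N. \<forall>q\<in>P i. \<not> player_cost N (p(i := q)) i < player_cost N p i)"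

definition optimal_routing :: "nat \<Rightarrow> (nat \<Rightarrow> 'v list set) \<Rightarrow> (nat \<Rightarrow> 'v list) \<Rightarrow> bool" where
  "optimal_routing N P p \<longleftrightarrow> is_routing N P p \<and>
     (\<forall>p'. is_routing N P p' \<longrightarrow> social_cost N p \<le> social_cost N p')"

end

theory Submission
  imports Defs
begin

(* Proof idea.  Fix a Nash routing p and any routing pstar with
   K = Cbar(pstar), D = Dbar(pstar).  Let X t be the set of players whose cost in p is at
   least t, and Z t the set of "heavy" pairs (e,k) of an edge e and a bucket k with
   normalized length 2^(k+1)-1 <= D whose bucket-k congestion plus normalized length
   reaches t.
   (A) If j is in X (t+1), switching j to pstar j costs at most the bucket congestion of
       some edge of pstar j plus one plus its normalized length; by the Nash property
       that edge/bucket pair lies in Z t.  Each pair serves at most K players, so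
       |X (t+1)| <= K |Z t|.
   (B) Each pair of Z t is used by at least t - D players of X t, and each player
       uses at most D pairs, so |Z t| (t - D) <= D |X t|.
   Hence |X| halves at every level t >= 2KD + D; the player of maximal congestion
   lies in X at its own cost M > Cbar(p), which forces M <= 3KD + D + lg(KD n^2). *)

section \<open>Paths, buckets and normalized lengths\<close>

lemma path_edges_eq_image: "path_edges q = (\<lambda>k. {q ! k, q ! Suc k}) ` {..<length q - 1}"
  unfolding path_edges_def by auto

lemma finite_path_edges: "finite (path_edges q)"
  unfolding path_edges_eq_image by simp

lemma card_path_edges_le_plen: "card (path_edges q) \<le> plen q"
proof -
  have "card (path_edges q) \<le> card {..<length q - 1}"
    unfolding path_edges_eq_image by (rule card_image_le) simp
  then show ?thesis unfolding plen_def by simp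
qed

lemma path_edges_nonempty:
  assumes "length q \<ge> 2"
  shows "path_edges q \<noteq> {}"
proof -
  have "{q ! 0, q ! Suc 0} \<in> path_edges q" unfolding path_edges_def using assms by force
  then show ?thesis by blast
qed

lemma plen_less_bucket_bound: "plen q < 2 ^ (bucket q + 1)"
proof (rule ccontr)
  assume "\<not> plen q < 2 ^ (bucket q + 1)"
  then have "2 ^ (bucket q + 1) \<le> plen q" by simp
  moreover have "\<forall>y. 2 ^ y \<le> plen q \<longrightarrow> y \<le> plen q"
    using less_exp less_imp_le_nat order_trans by blast
  ultimately have "bucket q + 1 \<le> (GREATEST k. 2 ^ k \<le> plen q)"
    by (intro Greatest_le_nat[where b = "plen q"]) auto
  then show False unfolding bucket_def by simp
qed

lemma plen_le_Dbar_path: "plen q \<le> Dbar_path q"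
  using plen_less_bucket_bound[of q] unfolding Dbar_path_def by simp

lemma Dbar_path_pos: "Dbar_path q \<ge> 1"
proof -
  have "(2::nat) \<le> 2 ^ (bucket q + 1)" by simp
  then show ?thesis unfolding Dbar_path_def by linarith
qed

section \<open>Simple graphs and routing games\<close>

lemma simple_graph_card_edges:
  assumes "simple_graph V E"
  shows "finite E" and "card E \<le> card V ^ 2"
proof -
  have finV: "finite V" and sub: "E \<subseteq> {B. B \<subseteq> V \<and> card B = 2}"
    using assms unfolding simple_graph_def by auto
  then have "E \<subseteq> Pow V" by auto
  then show "finite E" using finV finite_subset by blast
  have "card E \<le> card {B. B \<subseteq> V \<and> card B = 2}"
    using sub finV by (intro card_mono) auto
  also have "\<dots> = card V choose 2" using n_subsets[OF finV] by simp
  also have "\<dots> \<le> card V ^ 2"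
    by (cases "2 \<le> card V") (auto intro: binomial_le_pow simp: binomial_eq_0)
  finally show "card E \<le> card V ^ 2" .
qed

lemma strategy_path:
  assumes "routing_game V E N P" and "i < N" and "q \<in> P i"
  shows "length q \<ge> 2" and "path_edges q \<subseteq> E"
proof -
  obtain u v where "\<forall>q\<in>P i. simple_path V E u v q"
    using assms(1,2) unfolding routing_game_def by blast
  then show "length q \<ge> 2" and "path_edges q \<subseteq> E"
    using assms(3) unfolding simple_path_def by auto
qed

lemma routing_path:
  assumes "routing_game V E N P" and "is_routing N P p" and "i < N"
  shows "length (p i) \<ge> 2" and "path_edges (p i) \<subseteq> E"
  using strategy_path[OF assms(1,3)] assms(2,3) unfolding is_routing_def by auto

section \<open>Bucket congestion\<close>

definition bucket_users :: "nat \<Rightarrow> (nat \<Rightarrow> 'v list) \<Rightarrow> 'v set \<Rightarrow> nat \<Rightarrow> nat set" where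
  "bucket_users N p e k = {j. j < N \<and> e \<in> path_edges (p j) \<and> bucket (p j) = k}"

lemma finite_bucket_users: "finite (bucket_users N p e k)"
  unfolding bucket_users_def by auto

lemma Cbar_edge_eq_card: "Cbar_edge N p e q = card (bucket_users N p e (bucket q))"
  unfolding Cbar_edge_def bucket_users_def by simp

lemma Cbar_edge_le_Cbar_path: "e \<in> path_edges q \<Longrightarrow> Cbar_edge N p e q \<le> Cbar_path N p q"
  unfolding Cbar_path_def by (intro Max_ge) (auto simp: finite_path_edges)

lemma Cbar_path_le_Cbar: "j < N \<Longrightarrow> Cbar_path N p (p j) \<le> Cbar N p"
  unfolding Cbar_def by (intro Max_ge) auto

lemma Dbar_path_le_Dbar: "j < N \<Longrightarrow> Dbar_path (p j) \<le> Dbar N p"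
  unfolding Dbar_def by (intro Max_ge) auto

lemma Cbar_attained:
  assumes "N \<ge> 1"
  obtains i where "i < N" and "Cbar N p = Cbar_path N p (p i)"
proof -
  have "Cbar N p \<in> (\<lambda>i. Cbar_path N p (p i)) ` {..<N}"
    unfolding Cbar_def using assms by (intro Max_in) (auto simp: lessThan_empty_iff)
  then show ?thesis using that by auto
qed

lemma card_bucket_users_le_Cbar: "card (bucket_users N p e k) \<le> Cbar N p"
proof (cases "bucket_users N p e k = {}")
  case False
  then obtain j where j: "j < N" "e \<in> path_edges (p j)" "k = bucket (p j)"
    unfolding bucket_users_def by auto
  then have "card (bucket_users N p e k) = Cbar_edge N p e (p j)"
    by (simp add: Cbar_edge_eq_card)
  also have "\<dots> \<le> Cbar N p"
    using Cbar_edge_le_Cbar_path[OF j(2), of N p] Cbar_path_le_Cbar[OF j(1), of p] by linarith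
  finally show ?thesis .
qed simp

lemma Cbar_pos:
  assumes "routing_game V E N P" and "is_routing N P p"
  shows "Cbar N p \<ge> 1"
proof -
  have N0: "0 < N" using assms(1) unfolding routing_game_def by simp
  obtain e where e: "e \<in> path_edges (p 0)"
    using path_edges_nonempty[OF routing_path(1)[OF assms N0]] by blast
  then have "0 \<in> bucket_users N p e (bucket (p 0))" unfolding bucket_users_def using N0 by simp
  then have "1 \<le> card (bucket_users N p e (bucket (p 0)))"
    using finite_bucket_users card_0_eq by (metis One_nat_def Suc_leI empty_iff neq0_conv)
  then show ?thesis using card_bucket_users_le_Cbar order_trans by blast
qed

lemma Dbar_pos: "N \<ge> 1 \<Longrightarrow> Dbar N p \<ge> 1"
  using Dbar_path_le_Dbar[of 0 N p] Dbar_path_pos[of "p 0"] by simp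

lemma Cbar_path_after_switch:
  assumes "length q \<ge> 2"
  obtains e where "e \<in> path_edges q"
    and "Cbar_path N (p(j := q)) q \<le> card (bucket_users N p e (bucket q)) + 1"
proof -
  have "Cbar_path N (p(j := q)) q \<in> (\<lambda>e. Cbar_edge N (p(j := q)) e q) ` path_edges q"
    unfolding Cbar_path_def using finite_path_edges path_edges_nonempty[OF assms]
    by (intro Max_in) auto
  then obtain e where e: "e \<in> path_edges q"
    and eq: "Cbar_path N (p(j := q)) q = card (bucket_users N (p(j := q)) e (bucket q))"
    by (auto simp: Cbar_edge_eq_card)
  have "bucket_users N (p(j := q)) e (bucket q) \<subseteq> insert j (bucket_users N p e (bucket q))"
    unfolding bucket_users_def by auto
  then have "card (bucket_users N (p(j := q)) e (bucket q))
             \<le> card (insert j (bucket_users N p e (bucket q)))"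
    by (intro card_mono) (simp_all add: finite_bucket_users)
  also have "\<dots> \<le> card (bucket_users N p e (bucket q)) + 1"
    by (simp add: card_insert_if finite_bucket_users)
  finally show ?thesis using that e eq by simp
qed

section \<open>The two counting sets\<close>

definition costly_players :: "nat \<Rightarrow> (nat \<Rightarrow> 'v list) \<Rightarrow> nat \<Rightarrow> nat set" where
  "costly_players N p t = {j. j < N \<and> t \<le> player_cost N p j}"

definition heavy_pairs :: "'v set set \<Rightarrow> nat \<Rightarrow> (nat \<Rightarrow> 'v list) \<Rightarrow> nat \<Rightarrow> nat \<Rightarrow> ('v set \<times> nat) set" where
  "heavy_pairs E N p D t = {(e, k). e \<in> E \<and> 2 ^ (k + 1) - 1 \<le> D \<and>
     t \<le> card (bucket_users N p e k) + (2 ^ (k + 1) - 1)}"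

lemma finite_costly_players: "finite (costly_players N p t)"
  unfolding costly_players_def by auto

lemma heavy_pairs_subset: "heavy_pairs E N p D t \<subseteq> E \<times> {..<D}"
proof
  fix z assume "z \<in> heavy_pairs E N p D t"
  then obtain e k where z: "z = (e, k)" "e \<in> E" "2 ^ (k + 1) - 1 \<le> D"
    unfolding heavy_pairs_def by auto
  have "k + 1 < 2 ^ (k + 1)" by (rule less_exp)
  then show "z \<in> E \<times> {..<D}" using z by auto
qed

lemma card_heavy_pairs_le:
  assumes "finite E"
  shows "card (heavy_pairs E N p D t) \<le> card E * D"
proof -
  have "card (heavy_pairs E N p D t) \<le> card (E \<times> {..<D})"
    using assms by (intro card_mono heavy_pairs_subset) auto
  then show ?thesis by (simp add: card_cartesian_product)
qed

lemma finite_heavy_pairs: "finite E \<Longrightarrow> finite (heavy_pairs E N p D t)"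
  by (rule finite_subset[OF heavy_pairs_subset]) simp

(* Counting lemma (A): every player of cost above t in a Nash routing can be charged
   to a heavy pair on its path in pstar, and each pair is charged at most Cbar(pstar) times. *)
lemma costly_players_le_heavy_pairs:
  assumes game: "routing_game V E N P" and nash: "nash_routing N P p"
    and star: "is_routing N P pstar"
  shows "card (costly_players N p (t + 1))
           \<le> Cbar N pstar * card (heavy_pairs E N p (Dbar N pstar) t)"
proof -
  define Z where "Z = heavy_pairs E N p (Dbar N pstar) t"
  have charged: "costly_players N p (t + 1) \<subseteq> (\<Union>(e, k)\<in>Z. bucket_users N pstar e k)"
  proof
    fix j assume "j \<in> costly_players N p (t + 1)"
    then have j: "j < N" "t + 1 \<le> player_cost N p j" unfolding costly_players_def by auto
    define q where "q = pstar j"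
    have qP: "q \<in> P j" using star j(1) unfolding q_def is_routing_def by simp
    obtain e where e: "e \<in> path_edges q"
      and switch: "Cbar_path N (p(j := q)) q \<le> card (bucket_users N p e (bucket q)) + 1"
      using Cbar_path_after_switch[OF strategy_path(1)[OF game j(1) qP]] by blast
    have "player_cost N p j \<le> player_cost N (p(j := q)) j"
      using nash j(1) qP unfolding nash_routing_def by (simp add: not_less)
    also have "\<dots> = Cbar_path N (p(j := q)) q + Dbar_path q" unfolding player_cost_def by simp
    finally have "t \<le> card (bucket_users N p e (bucket q)) + Dbar_path q"
      using j(2) switch by linarith
    moreover have "e \<in> E" using e strategy_path(2)[OF game j(1) qP] by blast
    moreover have "Dbar_path q \<le> Dbar N pstar" using Dbar_path_le_Dbar[OF j(1)] q_def by simp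
    ultimately have "(e, bucket q) \<in> Z" unfolding Z_def heavy_pairs_def Dbar_path_def by simp
    moreover have "j \<in> bucket_users N pstar e (bucket q)"
      unfolding bucket_users_def using j e q_def by simp
    ultimately show "j \<in> (\<Union>(e, k)\<in>Z. bucket_users N pstar e k)" by blast
  qed
  have "finite E" using game simple_graph_card_edges(1) unfolding routing_game_def by blast
  then have finZ: "finite Z" unfolding Z_def by (rule finite_heavy_pairs)
  have "card (costly_players N p (t + 1)) \<le> card (\<Union>(e, k)\<in>Z. bucket_users N pstar e k)"
    using charged finZ by (intro card_mono) (auto simp: finite_bucket_users)
  also have "\<dots> \<le> (\<Sum>(e, k)\<in>Z. card (bucket_users N pstar e k))"
    using card_UN_le[OF finZ] by (simp add: case_prod_beta)
  also have "\<dots> \<le> card Z * Cbar N pstar"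
    using sum_bounded_above[of Z "\<lambda>(e, k). card (bucket_users N pstar e k)" "Cbar N pstar"]
    by (simp add: case_prod_beta card_bucket_users_le_Cbar)
  finally show ?thesis unfolding Z_def by (simp add: mult.commute)
qed

(* Counting lemma (B), valid for every routing: a heavy pair is used by at least t - D
   players of cost at least t, and each player uses at most D heavy pairs. *)
lemma heavy_pairs_le_costly_players:
  "card (heavy_pairs E N p D t) * (t - D) \<le> D * card (costly_players N p t)"
proof (cases "finite (heavy_pairs E N p D t)")
  case True
  define Z where "Z = heavy_pairs E N p D t"
  define X where "X = costly_players N p t"
  define users where "users = (\<lambda>(e, k). bucket_users N p e k)"
  have finZ: "finite Z" unfolding Z_def using True .
  have users_large: "t - D \<le> card (users z)" and users_costly: "users z \<subseteq> X"
    if "z \<in> Z" for z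
  proof -
    obtain e k where z: "z = (e, k)" "2 ^ (k + 1) - 1 \<le> D"
      "t \<le> card (bucket_users N p e k) + (2 ^ (k + 1) - 1)"
      using \<open>z \<in> Z\<close> unfolding Z_def heavy_pairs_def by auto
    show "t - D \<le> card (users z)" using z unfolding users_def by auto
    show "users z \<subseteq> X"
    proof
      fix j assume "j \<in> users z"
      then have j: "j < N" "e \<in> path_edges (p j)" "bucket (p j) = k"
        unfolding users_def bucket_users_def z by auto
      have "t \<le> Cbar_edge N p e (p j) + Dbar_path (p j)"
        using z j unfolding Cbar_edge_eq_card Dbar_path_def by simp
      also have "\<dots> \<le> player_cost N p j"
        unfolding player_cost_def using Cbar_edge_le_Cbar_path[OF j(2)] by simp
      finally show "j \<in> X" unfolding X_def costly_players_def using j by simp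
    qed
  qed
  have few_pairs: "card {z \<in> Z. j \<in> users z} \<le> D" for j
  proof (cases "{z \<in> Z. j \<in> users z} = {}")
    case False
    then obtain e k where "(e, k) \<in> Z" "j \<in> bucket_users N p e k" unfolding users_def by auto
    then have k: "k = bucket (p j)" "2 ^ (k + 1) - 1 \<le> D"
      unfolding bucket_users_def Z_def heavy_pairs_def by auto
    have "{z \<in> Z. j \<in> users z} \<subseteq> (\<lambda>e. (e, bucket (p j))) ` path_edges (p j)"
      unfolding users_def bucket_users_def by auto
    then have "card {z \<in> Z. j \<in> users z} \<le> card (path_edges (p j))"
      using finite_path_edges by (meson card_image_le card_mono finite_imageI order_trans)
    also have "\<dots> \<le> Dbar_path (p j)"
      using card_path_edges_le_plen plen_le_Dbar_path order_trans by blast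
    also have "\<dots> \<le> D" using k unfolding Dbar_path_def by simp
    finally show ?thesis .
  next
    case True
    show ?thesis unfolding True by simp
  qed
  have "card Z * (t - D) \<le> (\<Sum>z\<in>Z. card (users z))"
    using sum_bounded_below[of Z "t - D" "\<lambda>z. card (users z)"] users_large by simp
  also have "\<dots> = (\<Sum>z\<in>Z. card {j \<in> X. j \<in> users z})"
    using users_costly by (intro sum.cong) (auto simp: Int_absorb1 Collect_conj_eq[symmetric]
        intro!: arg_cong[where f = card])
  also have "\<dots> = (\<Sum>j\<in>X. card {z \<in> Z. j \<in> users z})"
    using sum.swap_restrict[OF finZ finite_costly_players, of "\<lambda>_ _. 1::nat"]
    by (simp add: X_def)
  also have "\<dots> \<le> card X * D" using sum_bounded_above[of X _ D] few_pairs by simp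
  finally show ?thesis unfolding Z_def X_def by (simp add: mult.commute)
qed simp

section \<open>Halving and the final estimate\<close>

lemma halving_sequence:
  fixes f :: "nat \<Rightarrow> nat"
  assumes halve: "\<And>t. a \<le> t \<Longrightarrow> 2 * f (t + 1) \<le> f t" and pos: "f M > 0"
  shows "i + a \<le> M \<Longrightarrow> 2 ^ i \<le> f (M - i)"
proof (induction i)
  case (Suc i)
  then have "2 ^ i \<le> f ((M - Suc i) + 1)" by (simp add: Suc_diff_Suc)
  moreover have "2 * f ((M - Suc i) + 1) \<le> f (M - Suc i)" using Suc.prems by (intro halve) simp
  ultimately show ?case by simp
qed (use pos in simp)

lemma costly_players_halve:
  assumes game: "routing_game V E N P" and nash: "nash_routing N P p"
    and star: "is_routing N P pstar"
    and level: "2 * (Cbar N pstar * Dbar N pstar) + Dbar N pstar \<le> t"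
  shows "2 * card (costly_players N p (t + 1)) \<le> card (costly_players N p t)"
proof -
  define K where "K = Cbar N pstar"
  define D where "D = Dbar N pstar"
  have N1: "N \<ge> 1" using game unfolding routing_game_def by simp
  have x0: "0 < K * D"
    using Cbar_pos[OF game star] Dbar_pos[OF N1, of pstar] unfolding K_def D_def by simp
  define above where "above = card (costly_players N p (t + 1))"
  have "above * (2 * (K * D)) \<le> above * (t - D)"
    using level unfolding K_def D_def by (intro mult_le_mono2) linarith
  also have "\<dots> \<le> K * card (heavy_pairs E N p D t) * (t - D)"
    using costly_players_le_heavy_pairs[OF game nash star]
    unfolding above_def K_def D_def by simp
  also have "\<dots> \<le> K * D * card (costly_players N p t)"
    using heavy_pairs_le_costly_players[of E N p D t] by (simp add: mult.assoc)
  finally have "K * D * (2 * above) \<le> K * D * card (costly_players N p t)"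
    by (simp add: ac_simps)
  then show ?thesis using x0 unfolding above_def by simp
qed

lemma nash_Cbar_linear_bound:
  assumes game: "routing_game V E N P" and nash: "nash_routing N P p"
    and star: "is_routing N P pstar" and V2: "card V \<ge> 2"
  shows "real (Cbar N p) \<le> 4 * real (Cbar N pstar * Dbar N pstar) + 2 * log 2 (card V)"
proof -
  define K where "K = Cbar N pstar"
  define D where "D = Dbar N pstar"
  define a where "a = 2 * (K * D) + D"
  define X where "X = costly_players N p"
  have N1: "N \<ge> 1" and graph: "simple_graph V E" using game unfolding routing_game_def by auto
  have K1: "K \<ge> 1" unfolding K_def using Cbar_pos[OF game star] .
  have D1: "D \<ge> 1" unfolding D_def using Dbar_pos[OF N1] .
  obtain i where i: "i < N" "Cbar N p = Cbar_path N p (p i)" using Cbar_attained[OF N1] .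
  define M where "M = player_cost N p i"
  have CM: "Cbar N p < M" unfolding M_def player_cost_def using i Dbar_path_pos[of "p i"] by linarith
  have l1: "1 \<le> log 2 (card V)" using le_log2_of_power[of 1 "card V"] V2 by simp
  have D_le: "D \<le> K * D" using K1 by simp
  show ?thesis
  proof (cases "a \<le> M")
    case True
    have "0 < card (X M)" unfolding X_def costly_players_def M_def
      using i(1) card_gt_0_iff by fastforce
    then have "2 ^ (M - a) \<le> card (X a)"
      using halving_sequence[of a "\<lambda>t. card (X t)" M "M - a"] True
        costly_players_halve[OF game nash star] unfolding X_def a_def K_def D_def by simp
    also have "\<dots> \<le> K * card (heavy_pairs E N p D (a - 1))"
      using costly_players_le_heavy_pairs[OF game nash star, of "a - 1"] D1
      unfolding X_def K_def D_def a_def by simp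
    also have "\<dots> \<le> K * (card E * D)"
      using card_heavy_pairs_le[OF simple_graph_card_edges(1)[OF graph]] by simp
    also have "\<dots> \<le> K * D * card V ^ 2"
      using simple_graph_card_edges(2)[OF graph] by simp
    finally have "real (M - a) \<le> log 2 (real (K * D * card V ^ 2))" by (rule le_log2_of_power)
    also have "\<dots> = log 2 (K * D) + 2 * log 2 (card V)"
      using K1 D1 V2 by (simp add: log_mult log_nat_power)
    also have "\<dots> \<le> real (K * D) + 2 * log 2 (card V)"
      using log2_of_power_le[of "K * D" "K * D"] K1 D1 less_exp[of "K * D"] by simp
    finally have "real (M - a) \<le> real (K * D) + 2 * log 2 (card V)" .
    moreover have "real D \<le> real (K * D)" using D_le by (simp only: of_nat_le_iff)
    ultimately show ?thesis using CM True unfolding a_def K_def D_def by simp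
  next
    case False
    then have "Cbar N p \<le> 4 * (K * D)" using CM D_le unfolding a_def by linarith
    then have "real (Cbar N p) \<le> real (4 * (K * D))" by (simp only: of_nat_le_iff)
    then show ?thesis using l1 unfolding K_def D_def by simp
  qed
qed

lemma linear_le_quadratic:
  fixes x l :: real
  assumes x: "1 \<le> x" and l: "1 \<le> l"
  shows "4 * x + 2 * l \<le> 18 * x * l\<^sup>2"
proof -
  have "l \<le> l\<^sup>2" using l by (simp add: power2_eq_square)
  moreover have "1 \<le> l\<^sup>2" using one_le_power[OF l] .
  moreover have "l\<^sup>2 \<le> x * l\<^sup>2" using mult_right_mono[OF x, of "l\<^sup>2"] by simp
  moreover have "x \<le> x * l\<^sup>2"
    using mult_left_mono[OF \<open>1 \<le> l\<^sup>2\<close>, of x] x by simp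
  ultimately show ?thesis by linarith
qed

theorem mainTheorem14:
  fixes V :: "'v set" and E :: "'v set set" and N :: nat
    and P :: "nat \<Rightarrow> 'v list set" and p pstar :: "nat \<Rightarrow> 'v list"
  assumes "routing_game V E N P"
    and "card V \<ge> 2"
    and "nash_routing N P p"
    and "optimal_routing N P pstar"
  shows "real (Cbar N p) \<le> 18 * real (Cbar N pstar) * real (Dbar N pstar) * (log 2 (real (card V)))\<^sup>2"
proof -
  have star: "is_routing N P pstar" using assms(4) unfolding optimal_routing_def by simp
  have N1: "N \<ge> 1" using assms(1) unfolding routing_game_def by simp
  have "1 \<le> Cbar N pstar * Dbar N pstar"
    using Cbar_pos[OF assms(1) star] Dbar_pos[OF N1, of pstar] mult_le_mono by fastforce
  then have x1: "1 \<le> real (Cbar N pstar * Dbar N pstar)" by (metis of_nat_1 of_nat_le_iff)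
  have l1: "1 \<le> log 2 (card V)" using le_log2_of_power[of 1 "card V"] assms(2) by simp
  have "real (Cbar N p) \<le> 4 * real (Cbar N pstar * Dbar N pstar) + 2 * log 2 (card V)"
    using nash_Cbar_linear_bound[OF assms(1,3) star assms(2)] .
  also have "\<dots> \<le> 18 * real (Cbar N pstar * Dbar N pstar) * (log 2 (card V))\<^sup>2"
    using linear_le_quadratic[OF x1 l1] .
  finally show ?thesis by simp
qed

end
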